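(* Let $\mathbb{K}$ be a subfield of $\mathbb{C}$, $q\ge1$, $A\in M_q(\mathbb{K}(z))$, and let $\mathcal S$ be the space of solutions of $Y'=AY$. Let $\alpha\in\mathbb{K}^*$ be a point which is not a singularity of $Y'=AY$. Then for any $P_1,\dots,P_q\in\mathbb{K}[z]$, the image of $\mathcal R[P_1,\dots,P_q]=\{Y=(y_1,\dots,y_q)\in\mathcal S:\ \sum_{i=1}^qP_i(z)y_i(z)\equiv0\}$ under the isomorphism $\mathcal S\to\mathbb{C}^q$, $Y\mapsto Y(\alpha)$, is a subspace of $\mathbb{C}^q$ defined over $\mathbb{K}$.
   Context: A subspace of $\mathbb{C}^q$ is defined over $\mathbb{K}$ if it has a $\mathbb{C}$-basis consisting of vectors in $\mathbb{K}^q$ (equivalently, it is the solution set of a system of linear equations with coefficients in $\mathbb{K}$). *)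

theory Defs
  imports "HOL-Analysis.Analysis" "HOL-Computational_Algebra.Polynomial"
begin

definition subfield_of_C :: "complex set \<Rightarrow> bool" where
  "subfield_of_C K \<longleftrightarrow> 0 \<in> K \<and> 1 \<in> K \<and>
     (\<forall>x\<in>K. \<forall>y\<in>K. x + y \<in> K \<and> x - y \<in> K \<and> x * y \<in> K) \<and>
     (\<forall>x\<in>K. x \<noteq> 0 \<longrightarrow> inverse x \<in> K)"

definition poly_over :: "complex set \<Rightarrow> complex poly \<Rightarrow> bool" where
  "poly_over K p \<longleftrightarrow> (\<forall>n. coeff p n \<in> K)"

definition defined_over :: "complex set \<Rightarrow> (complex ^ 'q) set \<Rightarrow> bool" where
  "defined_over K V \<longleftrightarrow>
     (\<exists>B. B \<subseteq> {v. \<forall>i. v $ i \<in> K} \<and> \<not> vec.dependent B \<and> vec.span B = V)"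

text \<open>Y solves Y' = A Y on the set U, where the entry A i j of the matrix of rational
  functions is given as the quotient of polynomials Pn i j / Pd i j.\<close>
definition solves_on ::
  "('q \<Rightarrow> 'q \<Rightarrow> complex poly) \<Rightarrow> ('q \<Rightarrow> 'q \<Rightarrow> complex poly) \<Rightarrow> complex set
    \<Rightarrow> (complex \<Rightarrow> complex ^ 'q::finite) \<Rightarrow> bool" where
  "solves_on Pn Pd U Y \<longleftrightarrow>
     (\<forall>z\<in>U. \<forall>i. ((\<lambda>w. Y w $ i) has_field_derivative
         (\<Sum>j\<in>UNIV. (poly (Pn i j) z / poly (Pd i j) z) * Y z $ j)) (at z))"

end

(*
  Expand everything at the regular point \<alpha>.  The coefficient matrix and the polynomials P_i
  have Taylor series at \<alpha> with coefficients in K.  A solution near \<alpha> is determined by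
  v = Y(\<alpha>): its Taylor coefficients are M_n v, where the coefficients of the fundamental
  matrix obey (n + 1) M_(n+1) = \<Sum>_(k \<le> n) A_k M_(n-k) and so lie in K; conversely this
  formal solution converges for every v, by a majorant estimate.  Hence \<Sum>_i P_i y_i vanishes
  near \<alpha> iff all its Taylor coefficients vanish, i.e. iff v lies in the common kernel of
  countably many linear forms with coefficients in K.  Finitely many of them cut out that
  kernel, and intersecting a subspace spanned by K-rational vectors with a K-rational
  hyperplane keeps it spanned by K-rational vectors (project along a K-rational vector
  off the hyperplane).
*)

theory Submission
  imports Defs "HOL-Complex_Analysis.Laurent_Convergence"
begin

(* Vectors and power series share the index notation $; power series coefficients are
   written with fps_nth throughout. *)
no_notation fps_nth (infixl \<open>$\<close> 75)

section \<open>Subfields of \<open>\<complex>\<close> and kernels of linear forms over them\<close>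

lemma
  assumes "subfield_of_C K"
  shows subfield_of_C_zero: "0 \<in> K"
    and subfield_of_C_one: "1 \<in> K"
    and subfield_of_C_add: "x \<in> K \<Longrightarrow> y \<in> K \<Longrightarrow> x + y \<in> K"
    and subfield_of_C_diff: "x \<in> K \<Longrightarrow> y \<in> K \<Longrightarrow> x - y \<in> K"
    and subfield_of_C_mult: "x \<in> K \<Longrightarrow> y \<in> K \<Longrightarrow> x * y \<in> K"
    and subfield_of_C_uminus: "x \<in> K \<Longrightarrow> - x \<in> K"
    and subfield_of_C_inverse: "x \<in> K \<Longrightarrow> inverse x \<in> K"
    and subfield_of_C_divide: "x \<in> K \<Longrightarrow> y \<in> K \<Longrightarrow> x / y \<in> K"
  using assms unfolding subfield_of_C_def divide_inverse
  by (metis inverse_zero diff_0)+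

lemma subfield_of_C_sum:
  "subfield_of_C K \<Longrightarrow> (\<And>x. x \<in> A \<Longrightarrow> f x \<in> K) \<Longrightarrow> sum f A \<in> K"
  by (induction A rule: infinite_finite_induct)
     (auto intro: subfield_of_C_zero subfield_of_C_add)

lemma subfield_of_C_of_nat: "subfield_of_C K \<Longrightarrow> of_nat n \<in> K"
  by (induction n) (auto intro: subfield_of_C_zero subfield_of_C_one subfield_of_C_add)

definition vectors_over :: "complex set \<Rightarrow> (complex ^ 'q) set" where
  "vectors_over K = {v. \<forall>i. v $ i \<in> K}"

definition pairing :: "complex ^ 'q \<Rightarrow> complex ^ 'q \<Rightarrow> complex" where
  "pairing x v = (\<Sum>l\<in>UNIV. x $ l * v $ l)"

lemma pairing_zero_left: "pairing 0 v = 0"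
  and pairing_zero_right: "pairing x 0 = 0"
  and pairing_add_left: "pairing (x + y) v = pairing x v + pairing y v"
  and pairing_add_right: "pairing x (v + w) = pairing x v + pairing x w"
  and pairing_diff_right: "pairing x (v - w) = pairing x v - pairing x w"
  and pairing_scale_left: "pairing (c *s x) v = c * pairing x v"
  and pairing_scale_right: "pairing x (c *s v) = c * pairing x v"
  by (simp_all add: pairing_def algebra_simps sum.distrib sum_subtractf sum_distrib_left)

lemma pairing_over:
  "subfield_of_C K \<Longrightarrow> x \<in> vectors_over K \<Longrightarrow> v \<in> vectors_over K \<Longrightarrow> pairing x v \<in> K"
  unfolding pairing_def vectors_over_def
  by (auto intro: subfield_of_C_sum subfield_of_C_mult)

lemma subspace_pairing_kernel: "vec.subspace {v. pairing x v = 0}"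
  by (simp add: vec.subspace_def pairing_zero_right pairing_add_right pairing_scale_right)

lemma subspace_pairing_annihilator: "vec.subspace {x. pairing x v = 0}"
  by (simp add: vec.subspace_def pairing_zero_left pairing_add_left pairing_scale_left)

lemma defined_over_span:
  assumes "T \<subseteq> vectors_over K"
  shows "defined_over K (vec.span T)"
proof -
  obtain B where "B \<subseteq> T" "vec.independent B" "T \<subseteq> vec.span B"
    using vec.maximal_independent_subset by blast
  then have "vec.span B = vec.span T"
    by (simp add: vec.span_eq vec.span_superset subset_trans)
  with \<open>B \<subseteq> T\<close> \<open>vec.independent B\<close> assms show ?thesis
    unfolding defined_over_def vectors_over_def by blast
qed

lemma defined_over_imp_subspace: "defined_over K V \<Longrightarrow> vec.subspace V"
  unfolding defined_over_def using vec.subspace_span by blast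

text \<open>If some \<open>s \<in> S\<close> lies off the hyperplane, projecting along \<open>s\<close> onto the hyperplane
  is linear, maps \<open>span S\<close> onto the intersection, and keeps \<open>S\<close> rational over \<open>K\<close>.\<close>
lemma span_Int_pairing_kernel_over:
  assumes K: "subfield_of_C K" and S: "S \<subseteq> vectors_over K" and x: "x \<in> vectors_over K"
  shows "\<exists>T \<subseteq> vectors_over K. vec.span S \<inter> {v. pairing x v = 0} = vec.span T"
proof (cases "\<forall>s\<in>S. pairing x s = 0")
  case True
  then have "vec.span S \<subseteq> {v. pairing x v = 0}"
    by (intro vec.span_minimal subspace_pairing_kernel) auto
  with S show ?thesis by (intro exI[of _ S]) auto
next
  case False
  then obtain s where s: "s \<in> S" "pairing x s \<noteq> 0" by blast
  define proj where "proj v = v - (pairing x v / pairing x s) *s s" for v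
  have lin: "Vector_Spaces.linear (*s) (*s) proj"
    unfolding proj_def
    by unfold_locales
      (simp_all add: pairing_add_right pairing_scale_right add_divide_distrib vector_sadd_rdistrib
        vector_ssub_ldistrib vector_smult_assoc)
  have "vec.span S \<inter> {v. pairing x v = 0} = proj ` vec.span S"
  proof (intro equalityI subsetI)
    fix v assume "v \<in> vec.span S \<inter> {v. pairing x v = 0}"
    then have "v = proj v" "v \<in> vec.span S" by (auto simp: proj_def)
    then show "v \<in> proj ` vec.span S" by blast
  next
    fix w assume "w \<in> proj ` vec.span S"
    then obtain v where v: "v \<in> vec.span S" "w = proj v" by blast
    have "w \<in> vec.span S"
      using v s by (simp add: proj_def vec.span_diff vec.span_scale vec.span_base)
    moreover have "pairing x w = 0"
      using s(2) by (simp add: v(2) proj_def pairing_diff_right pairing_scale_right)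
    ultimately show "w \<in> vec.span S \<inter> {v. pairing x v = 0}" by blast
  qed
  also have "\<dots> = vec.span (proj ` S)"
    by (rule vec.linear_span_image[OF lin, symmetric])
  finally have "vec.span S \<inter> {v. pairing x v = 0} = vec.span (proj ` S)" .
  moreover have "proj ` S \<subseteq> vectors_over K"
  proof (rule image_subsetI)
    fix v assume "v \<in> S"
    then have v: "v \<in> vectors_over K" and s': "s \<in> vectors_over K" using S s by auto
    have "pairing x v / pairing x s \<in> K"
      by (intro subfield_of_C_divide[OF K] pairing_over[OF K x] v s')
    then have "proj v $ i \<in> K" for i
      unfolding proj_def vector_minus_component vector_smult_component
      using v s' by (intro subfield_of_C_diff[OF K] subfield_of_C_mult[OF K])
        (auto simp: vectors_over_def)
    then show "proj v \<in> vectors_over K" by (simp add: vectors_over_def)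
  qed
  ultimately show ?thesis by (intro exI[of _ "proj ` S"]) auto
qed

lemma finite_pairing_kernels_spanned_over:
  assumes K: "subfield_of_C K" and "finite F" and "F \<subseteq> vectors_over K"
  shows "\<exists>T \<subseteq> vectors_over K. {v. \<forall>x\<in>F. pairing x v = 0} = vec.span T"
  using \<open>finite F\<close> \<open>F \<subseteq> vectors_over K\<close>
proof (induction F rule: finite_induct)
  case empty
  have "cart_basis \<subseteq> vectors_over K"
    by (auto simp: cart_basis_def vectors_over_def axis_def subfield_of_C_zero[OF K] subfield_of_C_one[OF K])
  then show ?case by (intro exI[of _ cart_basis]) (simp add: span_cart_basis)
next
  case (insert x F)
  then obtain T where T: "T \<subseteq> vectors_over K" "{v. \<forall>x\<in>F. pairing x v = 0} = vec.span T"
    by blast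
  obtain T' where T': "T' \<subseteq> vectors_over K" "vec.span T \<inter> {v. pairing x v = 0} = vec.span T'"
    using span_Int_pairing_kernel_over[OF K T(1)] insert.prems by blast
  have "{v. \<forall>y\<in>insert x F. pairing y v = 0} = vec.span T \<inter> {v. pairing x v = 0}"
    using T(2) by auto
  with T' show ?case by (intro exI[of _ T']) simp
qed

lemma pairing_kernels_defined_over:
  assumes K: "subfield_of_C K" and R: "R \<subseteq> vectors_over K"
  shows "defined_over K {v. \<forall>x\<in>R. pairing x v = 0}"
proof -
  obtain F where F: "F \<subseteq> R" "vec.independent F" "R \<subseteq> vec.span F"
    using vec.maximal_independent_subset by blast
  have "finite F" using F(2) vec.independent_bound_general by blast
  have "F \<subseteq> vectors_over K" using F(1) R by blast
  then obtain T where T: "T \<subseteq> vectors_over K" "{v. \<forall>x\<in>F. pairing x v = 0} = vec.span T"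
    using finite_pairing_kernels_spanned_over[OF K \<open>finite F\<close>] by blast
  have "{v. \<forall>x\<in>R. pairing x v = 0} = {v. \<forall>x\<in>F. pairing x v = 0}"
  proof (intro equalityI subsetI)
    fix v assume "v \<in> {v. \<forall>x\<in>F. pairing x v = 0}"
    then have "vec.span F \<subseteq> {x. pairing x v = 0}"
      by (intro vec.span_minimal subspace_pairing_annihilator) auto
    with F(3) show "v \<in> {v. \<forall>x\<in>R. pairing x v = 0}" by auto
  qed (use F(1) in auto)
  with T show ?thesis by (simp add: defined_over_span)
qed

section \<open>Polynomials and power series with coefficients in \<open>K\<close>\<close>

lemma poly_over_0: "subfield_of_C K \<Longrightarrow> poly_over K 0"
  by (simp add: poly_over_def subfield_of_C_zero)

lemma poly_over_pCons:
  "subfield_of_C K \<Longrightarrow> a \<in> K \<Longrightarrow> poly_over K p \<Longrightarrow> poly_over K (pCons a p)"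
  by (simp add: poly_over_def coeff_pCons split: nat.split)

lemma poly_over_add: "subfield_of_C K \<Longrightarrow> poly_over K p \<Longrightarrow> poly_over K q \<Longrightarrow> poly_over K (p + q)"
  by (simp add: poly_over_def subfield_of_C_add)

lemma poly_over_mult: "subfield_of_C K \<Longrightarrow> poly_over K p \<Longrightarrow> poly_over K q \<Longrightarrow> poly_over K (p * q)"
  unfolding poly_over_def coeff_mult
  by (auto intro!: subfield_of_C_sum subfield_of_C_mult)

lemma poly_over_pcompose:
  assumes K: "subfield_of_C K" and "poly_over K p" "poly_over K q"
  shows "poly_over K (p \<circ>\<^sub>p q)"
  using \<open>poly_over K p\<close>
proof (induction p)
  case (pCons a p)
  then have "a \<in> K" "poly_over K p"
    by (auto simp: poly_over_def dest: spec[of _ 0] spec[of _ "Suc n" for n])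
  then show ?case
    unfolding pcompose_pCons
    by (intro poly_over_add poly_over_mult poly_over_pCons poly_over_0 K pCons.IH \<open>poly_over K q\<close>)
qed (simp add: poly_over_0 K)

definition fps_over :: "complex set \<Rightarrow> complex fps \<Rightarrow> bool" where
  "fps_over K f \<longleftrightarrow> (\<forall>n. fps_nth f n \<in> K)"

lemma fps_over_fps_of_poly: "poly_over K p \<Longrightarrow> fps_over K (fps_of_poly p)"
  by (simp add: poly_over_def fps_over_def)

lemma fps_over_mult: "subfield_of_C K \<Longrightarrow> fps_over K f \<Longrightarrow> fps_over K g \<Longrightarrow> fps_over K (f * g)"
  unfolding fps_over_def fps_mult_nth
  by (auto intro!: subfield_of_C_sum subfield_of_C_mult)

lemma fps_over_inverse:
  assumes K: "subfield_of_C K" and f: "fps_over K f"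
  shows "fps_over K (inverse f)"
proof -
  have "fps_right_inverse_constructor f (inverse (fps_nth f 0)) n \<in> K" for n
  proof (induction n rule: less_induct)
    case (less n)
    have fK: "fps_nth f k \<in> K" for k using f by (simp add: fps_over_def)
    show ?case
    proof (cases n)
      case 0
      then show ?thesis by (simp add: fK subfield_of_C_inverse[OF K])
    next
      case (Suc m)
      show ?thesis
        unfolding Suc fps_right_inverse_constructor.simps
        by (intro subfield_of_C_uminus[OF K] subfield_of_C_mult[OF K] subfield_of_C_inverse[OF K]
            subfield_of_C_sum[OF K] fK less) (auto simp: Suc)
    qed
  qed
  then show ?thesis by (simp add: fps_over_def fps_inverse_def)
qed

lemma fps_over_divide:
  "subfield_of_C K \<Longrightarrow> fps_over K f \<Longrightarrow> fps_over K g \<Longrightarrow> fps_nth g 0 \<noteq> 0 \<Longrightarrow> fps_over K (f / g)"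
  by (simp add: fps_divide_unit fps_over_mult fps_over_inverse)

lemma fps_over_poly_shift:
  "subfield_of_C K \<Longrightarrow> \<alpha> \<in> K \<Longrightarrow> poly_over K p \<Longrightarrow> fps_over K (fps_of_poly (p \<circ>\<^sub>p [:\<alpha>, 1:]))"
  by (intro fps_over_fps_of_poly poly_over_pcompose poly_over_pCons poly_over_0 subfield_of_C_one)

lemma fps_nth_poly_shift_0: "fps_nth (fps_of_poly (p \<circ>\<^sub>p [:\<alpha>, 1:])) 0 = poly p \<alpha>"
  by (simp add: poly_0_coeff_0 [symmetric] poly_pcompose)

section \<open>Formal solutions of \<open>Y\<acute> = A Y\<close>\<close>

text \<open>Taylor coefficients of the fundamental matrix \<open>\<Phi>\<close> with \<open>\<Phi>(0) = 1\<close> and \<open>\<Phi>\<acute> = A \<Phi>\<close>: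
  comparing coefficients gives \<open>(n + 1) M(n + 1) = (\<Sum>k\<le>n. A(k) M(n - k))\<close>.\<close>
fun fundamental_coeff :: "('q::finite \<Rightarrow> 'q \<Rightarrow> complex fps) \<Rightarrow> nat \<Rightarrow> complex ^ 'q ^ 'q" where
  "fundamental_coeff A 0 = mat 1"
| "fundamental_coeff A (Suc n) =
     (\<chi> i l. (\<Sum>j\<in>UNIV. \<Sum>k\<in>{0..n}. fps_nth (A i j) k * fundamental_coeff A (n - k) $ j $ l)
       / of_nat (Suc n))"

lemma fundamental_coeff_Suc_entry:
  "of_nat (Suc n) * fundamental_coeff A (Suc n) $ i $ l =
     (\<Sum>j\<in>UNIV. \<Sum>k\<in>{0..n}. fps_nth (A i j) k * fundamental_coeff A (n - k) $ j $ l)"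
  by (simp del: of_nat_Suc)

lemma fundamental_coeff_Suc_mult_vector:
  "of_nat (Suc n) * (fundamental_coeff A (Suc n) *v v) $ i =
     (\<Sum>j\<in>UNIV. \<Sum>k\<in>{0..n}. fps_nth (A i j) k * (fundamental_coeff A (n - k) *v v) $ j)"
proof -
  have "of_nat (Suc n) * (fundamental_coeff A (Suc n) *v v) $ i
      = (\<Sum>l\<in>UNIV. \<Sum>j\<in>UNIV. \<Sum>k\<in>{0..n}.
           fps_nth (A i j) k * fundamental_coeff A (n - k) $ j $ l * v $ l)"
    by (simp only: matrix_vector_mult_def vec_lambda_beta sum_distrib_left sum_distrib_right
        mult.assoc [symmetric] fundamental_coeff_Suc_entry)
  also have "\<dots> = (\<Sum>j\<in>UNIV. \<Sum>k\<in>{0..n}. \<Sum>l\<in>UNIV.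
           fps_nth (A i j) k * fundamental_coeff A (n - k) $ j $ l * v $ l)"
    by (subst sum.swap) (simp only: sum.swap[of _ "{0..n}"])
  also have "\<dots> = (\<Sum>j\<in>UNIV. \<Sum>k\<in>{0..n}. fps_nth (A i j) k * (fundamental_coeff A (n - k) *v v) $ j)"
    by (simp add: matrix_vector_mult_def sum_distrib_left mult.assoc)
  finally show ?thesis .
qed

lemma fundamental_coeff_over:
  assumes K: "subfield_of_C K" and A: "\<And>i j. fps_over K (A i j)"
  shows "fundamental_coeff A n $ i $ l \<in> K"
proof (induction n arbitrary: i l rule: less_induct)
  case (less n)
  show ?case
  proof (cases n)
    case 0
    then show ?thesis by (simp add: mat_def subfield_of_C_zero[OF K] subfield_of_C_one[OF K])
  next
    case (Suc m)
    have "fps_nth (A i j) k \<in> K" for i j k using A by (simp add: fps_over_def)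
    then show ?thesis
      unfolding Suc fundamental_coeff.simps vec_lambda_beta
      by (intro subfield_of_C_divide[OF K] subfield_of_C_sum[OF K] subfield_of_C_mult[OF K]
          subfield_of_C_of_nat[OF K] less) (auto simp: Suc)
  qed
qed

definition formal_solution :: "('q::finite \<Rightarrow> 'q \<Rightarrow> complex fps) \<Rightarrow> complex ^ 'q \<Rightarrow> 'q \<Rightarrow> complex fps" where
  "formal_solution A v i = Abs_fps (\<lambda>n. (fundamental_coeff A n *v v) $ i)"

lemma formal_solution_nth_0: "fps_nth (formal_solution A v i) 0 = v $ i"
  by (simp add: formal_solution_def)

lemma fps_deriv_formal_solution:
  "fps_deriv (formal_solution A v i) = (\<Sum>j\<in>UNIV. A i j * formal_solution A v j)"
proof (rule fps_ext)
  fix n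
  have "fps_nth (fps_deriv (formal_solution A v i)) n
      = of_nat (Suc n) * (fundamental_coeff A (Suc n) *v v) $ i"
    by (simp add: formal_solution_def del: fundamental_coeff.simps of_nat_Suc)
  also have "\<dots> = fps_nth (\<Sum>j\<in>UNIV. A i j * formal_solution A v j) n"
    by (simp add: fundamental_coeff_Suc_mult_vector fps_sum_nth fps_mult_nth formal_solution_def
        del: fundamental_coeff.simps of_nat_Suc)
  finally show "fps_nth (fps_deriv (formal_solution A v i)) n =
      fps_nth (\<Sum>j\<in>UNIV. A i j * formal_solution A v j) n" .
qed

lemma formal_solution_unique:
  assumes init: "\<And>i. fps_nth (F i) 0 = v $ i"
    and deriv: "\<And>i. fps_deriv (F i) = (\<Sum>j\<in>UNIV. A i j * F j)"
  shows "F i = formal_solution A v i"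
proof -
  have "fps_nth (F i) n = (fundamental_coeff A n *v v) $ i" for n
  proof (induction n arbitrary: i rule: less_induct)
    case (less n)
    show ?case
    proof (cases n)
      case 0
      then show ?thesis by (simp add: init)
    next
      case (Suc m)
      have "of_nat (Suc m) * fps_nth (F i) (Suc m) = fps_nth (fps_deriv (F i)) m"
        by simp
      also have "\<dots> = of_nat (Suc m) * (fundamental_coeff A (Suc m) *v v) $ i"
        unfolding deriv fundamental_coeff_Suc_mult_vector
        by (simp add: fps_sum_nth fps_mult_nth less Suc del: fundamental_coeff.simps)
      finally show ?thesis
        using Suc by (simp del: fundamental_coeff.simps of_nat_Suc)
    qed
  qed
  then show ?thesis by (simp add: fps_eq_iff formal_solution_def)
qed

definition relation_form ::
  "('q::finite \<Rightarrow> complex fps) \<Rightarrow> ('q \<Rightarrow> 'q \<Rightarrow> complex fps) \<Rightarrow> nat \<Rightarrow> complex ^ 'q" where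
  "relation_form P A n =
     (\<chi> l. \<Sum>i\<in>UNIV. \<Sum>k\<in>{0..n}. fps_nth (P i) k * fundamental_coeff A (n - k) $ i $ l)"

lemma fps_nth_relation_formal_solution:
  "fps_nth (\<Sum>i\<in>UNIV. P i * formal_solution A v i) n = pairing (relation_form P A n) v"
proof -
  have "fps_nth (\<Sum>i\<in>UNIV. P i * formal_solution A v i) n
      = (\<Sum>i\<in>UNIV. \<Sum>k\<in>{0..n}. \<Sum>l\<in>UNIV.
           fps_nth (P i) k * fundamental_coeff A (n - k) $ i $ l * v $ l)"
    by (simp add: fps_sum_nth fps_mult_nth formal_solution_def matrix_vector_mult_def
        sum_distrib_left mult.assoc del: fundamental_coeff.simps)
  also have "\<dots> = (\<Sum>i\<in>UNIV. \<Sum>l\<in>UNIV. \<Sum>k\<in>{0..n}.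
           fps_nth (P i) k * fundamental_coeff A (n - k) $ i $ l * v $ l)"
    by (intro sum.cong refl sum.swap)
  also have "\<dots> = (\<Sum>l\<in>UNIV. \<Sum>i\<in>UNIV. \<Sum>k\<in>{0..n}.
           fps_nth (P i) k * fundamental_coeff A (n - k) $ i $ l * v $ l)"
    by (rule sum.swap)
  also have "\<dots> = pairing (relation_form P A n) v"
    by (simp only: pairing_def relation_form_def vec_lambda_beta sum_distrib_right)
  finally show ?thesis .
qed

lemma relation_form_over:
  assumes K: "subfield_of_C K" and P: "\<And>i. fps_over K (P i)" and A: "\<And>i j. fps_over K (A i j)"
  shows "relation_form P A n \<in> vectors_over K"
  using P unfolding vectors_over_def relation_form_def fps_over_def
  by (auto intro!: subfield_of_C_sum[OF K] subfield_of_C_mult[OF K] fundamental_coeff_over[OF K A])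

section \<open>Convergence of formal solutions\<close>

lemma sum_half_powers_le_2: "(\<Sum>k\<in>{0..n}. (1 / 2 :: real) ^ k) \<le> 2"
proof -
  have "(\<Sum>k\<in>{0..n}. (1 / 2 :: real) ^ k) = 2 - (1 / 2) ^ n"
    by (induction n) (simp_all add: algebra_simps)
  then show ?thesis by simp
qed

lemma fundamental_coeff_norm_le:
  fixes A :: "'q::finite \<Rightarrow> 'q \<Rightarrow> complex fps"
  assumes A: "\<And>i j k. norm (fps_nth (A i j) k) \<le> C * c ^ k" and c: "0 \<le> c"
    and \<beta>: "2 * c \<le> \<beta>" "2 * real CARD('q) * C \<le> \<beta>"
  shows "norm (fundamental_coeff A n $ i $ l) \<le> \<beta> ^ n"
proof (induction n arbitrary: i l rule: less_induct)
  case (less n)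
  show ?case
  proof (cases n)
    case 0
    then show ?thesis by (simp add: mat_def)
  next
    case (Suc m)
    have "0 \<le> C" using order_trans[OF norm_ge_zero A[of i i 0]] by simp
    have "0 \<le> \<beta>" using c \<beta>(1) by simp
    \<comment> \<open>With \<open>c ^ k \<le> (\<beta> / 2) ^ k\<close> the convolution is at most \<open>2 CARD('q) C \<beta> ^ m \<le> \<beta> ^ Suc m\<close>.\<close>
    have summand: "norm (fps_nth (A i j) k * fundamental_coeff A (m - k) $ j $ l)
        \<le> C * \<beta> ^ m * (1 / 2) ^ k" if "k \<in> {0..m}" for j k
    proof -
      have "norm (fps_nth (A i j) k * fundamental_coeff A (m - k) $ j $ l) \<le> C * c ^ k * \<beta> ^ (m - k)"
        unfolding norm_mult using A less[of "m - k"] Suc \<open>0 \<le> C\<close> c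
        by (intro mult_mono) auto
      also have "\<dots> \<le> C * (\<beta> / 2) ^ k * \<beta> ^ (m - k)"
        using c \<beta>(1) \<open>0 \<le> C\<close> \<open>0 \<le> \<beta>\<close> by (intro mult_right_mono mult_left_mono power_mono) auto
      also have "\<dots> = C * \<beta> ^ m * (1 / 2) ^ k"
        using that by (simp add: power_divide flip: power_add)
      finally show ?thesis .
    qed
    have "norm (fundamental_coeff A (Suc m) $ i $ l)
        \<le> real (Suc m) * norm (fundamental_coeff A (Suc m) $ i $ l)"
      by (rule mult_le_cancel_right1[THEN iffD2]) simp
    also have "\<dots> = norm (of_nat (Suc m) * fundamental_coeff A (Suc m) $ i $ l)"
      by (simp only: norm_mult norm_of_nat)
    also have "\<dots> = norm (\<Sum>j\<in>UNIV. \<Sum>k\<in>{0..m}. fps_nth (A i j) k * fundamental_coeff A (m - k) $ j $ l)"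
      by (simp only: fundamental_coeff_Suc_entry)
    also have "\<dots> \<le> (\<Sum>j\<in>UNIV. \<Sum>k\<in>{0..m}. norm (fps_nth (A i j) k * fundamental_coeff A (m - k) $ j $ l))"
      by (intro order_trans[OF norm_sum] sum_mono norm_sum)
    also have "\<dots> \<le> (\<Sum>j\<in>(UNIV :: 'q set). \<Sum>k\<in>{0..m}. C * \<beta> ^ m * (1 / 2) ^ k)"
      by (rule sum_mono)+ (rule summand)
    also have "\<dots> = real CARD('q) * C * \<beta> ^ m * (\<Sum>k\<in>{0..m}. (1 / 2) ^ k)"
      by (simp add: sum_distrib_left mult.assoc)
    also have "\<dots> \<le> real CARD('q) * C * \<beta> ^ m * 2"
      using \<open>0 \<le> C\<close> \<open>0 \<le> \<beta>\<close> by (intro mult_left_mono sum_half_powers_le_2) simp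
    also have "\<dots> \<le> \<beta> ^ Suc m"
      using mult_right_mono[OF \<beta>(2) zero_le_power[OF \<open>0 \<le> \<beta>\<close>, of m]]
      by (simp add: algebra_simps)
    finally show ?thesis using Suc by simp
  qed
qed

lemma fps_conv_radius_pos_imp_geometric_bound:
  fixes f :: "complex fps"
  assumes "fps_conv_radius f > 0"
  shows "\<exists>C c. 0 \<le> c \<and> (\<forall>n. norm (fps_nth f n) \<le> C * c ^ n)"
proof -
  obtain r where r: "0 < ereal r" "ereal r < fps_conv_radius f"
    using ereal_dense2[OF assms] by blast
  then have "summable (\<lambda>n. norm (fps_nth f n * of_real r ^ n))"
    by (intro norm_summable_fps) simp
  then obtain M where M: "\<And>n. norm (norm (fps_nth f n * of_real r ^ n)) \<le> M"
    using summable_imp_Bseq unfolding Bseq_def by blast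
  have "norm (fps_nth f n) \<le> M * (1 / r) ^ n" for n
    using M[of n] r(1) by (simp add: norm_mult norm_power power_one_over field_simps)
  with r(1) show ?thesis by (intro exI[of _ M] exI[of _ "1 / r"]) auto
qed

lemma finite_fps_family_geometric_bound:
  fixes F :: "'i::finite \<Rightarrow> complex fps"
  assumes "\<And>i. fps_conv_radius (F i) > 0"
  shows "\<exists>C c. 0 \<le> c \<and> (\<forall>i n. norm (fps_nth (F i) n) \<le> C * c ^ n)"
proof -
  have "\<forall>i. \<exists>C c. 0 \<le> c \<and> (\<forall>n. norm (fps_nth (F i) n) \<le> C * c ^ n)"
    using fps_conv_radius_pos_imp_geometric_bound assms by blast
  then obtain C c where Cc: "\<And>i. 0 \<le> c i" "\<And>i n. norm (fps_nth (F i) n) \<le> C i * c i ^ n"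
    by metis
  have C: "0 \<le> C i" for i
    using order_trans[OF norm_ge_zero Cc(2)[of i 0]] by simp
  have "norm (fps_nth (F i) n) \<le> sum C UNIV * sum c UNIV ^ n" for i n
  proof -
    have "C i * c i ^ n \<le> sum C UNIV * sum c UNIV ^ n"
      using C Cc(1)
      by (intro mult_mono power_mono member_le_sum zero_le_power sum_nonneg) auto
    with Cc(2) show ?thesis by (rule order_trans)
  qed
  moreover have "0 \<le> sum c UNIV" using Cc(1) by (simp add: sum_nonneg)
  ultimately show ?thesis by blast
qed

lemma fps_conv_radius_pos_of_geometric_bound:
  fixes f :: "complex fps"
  assumes f: "\<And>n. norm (fps_nth f n) \<le> C * \<beta> ^ n" and "0 < \<beta>"
  shows "fps_conv_radius f > 0"
proof -
  define \<rho> where "\<rho> = 1 / (2 * \<beta>)"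
  have "0 < \<rho>" "\<beta> * \<rho> = 1 / 2" using \<open>0 < \<beta>\<close> by (simp_all add: \<rho>_def)
  have bound: "norm (fps_nth f n * of_real \<rho> ^ n) \<le> C * (1 / 2) ^ n" for n
  proof -
    have "norm (fps_nth f n * of_real \<rho> ^ n) \<le> C * \<beta> ^ n * \<rho> ^ n"
      unfolding norm_mult norm_power norm_of_real abs_of_pos[OF \<open>0 < \<rho>\<close>]
      using \<open>0 < \<rho>\<close> by (intro mult_right_mono f) simp
    also have "\<dots> = C * (1 / 2) ^ n"
      by (simp only: mult.assoc \<open>\<beta> * \<rho> = 1 / 2\<close> flip: power_mult_distrib)
    finally show ?thesis .
  qed
  have "summable (\<lambda>n. C * (1 / 2 :: real) ^ n)"
    by (intro summable_mult summable_geometric) simp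
  then have "summable (\<lambda>n. fps_nth f n * of_real \<rho> ^ n)"
    by (rule summable_comparison_test') (rule bound)
  then have "ereal (norm (of_real \<rho> :: complex)) \<le> fps_conv_radius f"
    unfolding fps_conv_radius_def by (rule conv_radius_geI)
  with \<open>0 < \<rho>\<close> show ?thesis
    using order.strict_trans2[of 0 "ereal \<rho>"] by simp
qed

lemma formal_solution_conv_radius_pos:
  fixes A :: "'q::finite \<Rightarrow> 'q \<Rightarrow> complex fps"
  assumes "\<And>i j. fps_conv_radius (A i j) > 0"
  shows "fps_conv_radius (formal_solution A v i) > 0"
proof -
  have "\<exists>C c. 0 \<le> c \<and> (\<forall>p n. norm (fps_nth (A (fst p) (snd p)) n) \<le> C * c ^ n)"
    by (rule finite_fps_family_geometric_bound) (simp add: assms)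
  then obtain C c where "0 \<le> c" and bound: "\<And>p n. norm (fps_nth (A (fst p) (snd p)) n) \<le> C * c ^ n"
    by blast
  have Cc: "norm (fps_nth (A i j) n) \<le> C * c ^ n" for i j n
    using bound[of "(i, j)"] by simp
  define \<beta> where "\<beta> = 2 * c + 2 * real CARD('q) * \<bar>C\<bar> + 1"
  have "2 * real CARD('q) * C \<le> 2 * real CARD('q) * \<bar>C\<bar>"
    by (intro mult_left_mono abs_ge_self) simp
  moreover have "0 \<le> 2 * real CARD('q) * \<bar>C\<bar>" by simp
  ultimately have "2 * c \<le> \<beta>" "2 * real CARD('q) * C \<le> \<beta>" "0 < \<beta>"
    using \<open>0 \<le> c\<close> unfolding \<beta>_def by linarith+
  note M = fundamental_coeff_norm_le[OF Cc \<open>0 \<le> c\<close> this(1,2)]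
  have "norm (fps_nth (formal_solution A v i) n) \<le> (\<Sum>l\<in>UNIV. norm (v $ l)) * \<beta> ^ n" for n
  proof -
    have "norm (fps_nth (formal_solution A v i) n)
        \<le> (\<Sum>l\<in>UNIV. norm (fundamental_coeff A n $ i $ l) * norm (v $ l))"
      unfolding formal_solution_def fps_nth_Abs_fps matrix_vector_mult_def vec_lambda_beta
      by (rule order_trans[OF norm_sum]) (simp add: norm_mult)
    also have "\<dots> \<le> (\<Sum>l\<in>UNIV. \<beta> ^ n * norm (v $ l))"
      by (intro sum_mono mult_right_mono M norm_ge_zero)
    finally show ?thesis by (simp add: sum_distrib_left mult.commute)
  qed
  then show ?thesis using \<open>0 < \<beta>\<close> by (rule fps_conv_radius_pos_of_geometric_bound)
qed

section \<open>Analytic solutions\<close>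

definition solves_at ::
  "('q::finite \<Rightarrow> 'q \<Rightarrow> complex \<Rightarrow> complex) \<Rightarrow> (complex \<Rightarrow> complex ^ 'q) \<Rightarrow> complex \<Rightarrow> bool" where
  "solves_at a Y z \<longleftrightarrow>
     (\<forall>i. ((\<lambda>w. Y w $ i) has_field_derivative (\<Sum>j\<in>UNIV. a i j z * Y z $ j)) (at z))"

lemma eventually_nhds_shift:
  fixes \<alpha> :: "'a::real_normed_vector"
  shows "eventually P (nhds \<alpha>) \<longleftrightarrow> eventually (\<lambda>w. P (\<alpha> + w)) (nhds 0)"
proof -
  have "nhds \<alpha> = filtermap (\<lambda>w. \<alpha> + w) (nhds 0)"
    using filtermap_nhds_shift[of "- \<alpha>" 0] by (simp add: add.commute)
  then show ?thesis by (simp add: eventually_filtermap)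
qed

lemma ex_ball_iff_eventually_nhds:
  "(\<exists>e>0. \<forall>z\<in>ball \<alpha> e. P z) \<longleftrightarrow> eventually P (nhds \<alpha>)"
  unfolding eventually_nhds_metric Ball_def mem_ball by (simp add: dist_commute)

lemma solution_has_fps_expansion:
  assumes a: "\<And>i j. (\<lambda>w. a i j (\<alpha> + w)) has_fps_expansion A i j"
    and Y: "eventually (solves_at a Y) (nhds \<alpha>)"
  shows "(\<lambda>w. Y (\<alpha> + w) $ i) has_fps_expansion formal_solution A (Y \<alpha>) i"
proof -
  obtain e where "e > 0" and sol: "\<And>z. z \<in> ball \<alpha> e \<Longrightarrow> solves_at a Y z"
    using Y unfolding ex_ball_iff_eventually_nhds[symmetric] by blast
  have "(\<lambda>z. Y z $ i) holomorphic_on ball \<alpha> e" for i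
    using sol unfolding holomorphic_on_open[OF open_ball] solves_at_def by blast
  then have G: "(\<lambda>w. Y (\<alpha> + w) $ i) has_fps_expansion fps_expansion (\<lambda>z. Y z $ i) \<alpha>" for i
    using \<open>e > 0\<close> by (intro analytic_at_imp_has_fps_expansion holomorphic_on_imp_analytic_at) auto
  have init: "fps_nth (fps_expansion (\<lambda>z. Y z $ i) \<alpha>) 0 = Y \<alpha> $ i" for i
    by (simp add: fps_expansion_def)
  have deriv: "fps_deriv (fps_expansion (\<lambda>z. Y z $ i) \<alpha>)
      = (\<Sum>j\<in>UNIV. A i j * fps_expansion (\<lambda>z. Y z $ j) \<alpha>)" for i
  proof -
    have "eventually (\<lambda>w. solves_at a Y (\<alpha> + w)) (nhds 0)"
      using Y by (simp only: eventually_nhds_shift[of _ \<alpha>])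
    then have ev: "eventually (\<lambda>w. deriv (\<lambda>w. Y (\<alpha> + w) $ i) w
        = (\<Sum>j\<in>UNIV. a i j (\<alpha> + w) * Y (\<alpha> + w) $ j)) (nhds 0)"
    proof eventually_elim
      case (elim w)
      then have "((\<lambda>u. Y u $ i) has_field_derivative (\<Sum>j\<in>UNIV. a i j (\<alpha> + w) * Y (\<alpha> + w) $ j))
          (at (w + \<alpha>))"
        by (simp add: solves_at_def add.commute)
      then show ?case
        unfolding DERIV_shift by (subst add.commute) (rule DERIV_imp_deriv)
    qed
    have "deriv (\<lambda>w. Y (\<alpha> + w) $ i) has_fps_expansion fps_deriv (fps_expansion (\<lambda>z. Y z $ i) \<alpha>)"
      by (rule has_fps_expansion_deriv[OF G])
    then have "(\<lambda>w. \<Sum>j\<in>UNIV. a i j (\<alpha> + w) * Y (\<alpha> + w) $ j)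
        has_fps_expansion fps_deriv (fps_expansion (\<lambda>z. Y z $ i) \<alpha>)"
      by (rule iffD1[OF has_fps_expansion_cong[OF ev refl]])
    moreover have "(\<lambda>w. \<Sum>j\<in>UNIV. a i j (\<alpha> + w) * Y (\<alpha> + w) $ j)
        has_fps_expansion (\<Sum>j\<in>UNIV. A i j * fps_expansion (\<lambda>z. Y z $ j) \<alpha>)"
      by (intro has_fps_expansion_sum has_fps_expansion_mult a G)
    ultimately show ?thesis by (rule fps_expansion_unique_complex)
  qed
  from init deriv have "fps_expansion (\<lambda>z. Y z $ i) \<alpha> = formal_solution A (Y \<alpha>) i"
    by (rule formal_solution_unique)
  with G[of i] show ?thesis by simp
qed

lemma formal_solution_solves:
  fixes A :: "'q::finite \<Rightarrow> 'q \<Rightarrow> complex fps"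
  assumes a: "\<And>i j. (\<lambda>w. a i j (\<alpha> + w)) has_fps_expansion A i j"
  shows "eventually (solves_at a (\<lambda>z. \<chi> i. eval_fps (formal_solution A v i) (z - \<alpha>))) (nhds \<alpha>)"
proof -
  define F where "F = formal_solution A v"
  define Y where "Y = (\<lambda>z. \<chi> i. eval_fps (F i) (z - \<alpha>))"
  have rad: "fps_conv_radius (F i) > 0" for i
    unfolding F_def using a by (intro formal_solution_conv_radius_pos) (simp add: has_fps_expansion_def)
  have "eventually (\<lambda>w. \<forall>i. ereal (norm w) < fps_conv_radius (F i)) (nhds 0)"
  proof (rule eventually_all_finite)
    fix i
    have "eventually (\<lambda>w. w \<in> eball 0 (fps_conv_radius (F i))) (nhds 0)"
      using rad[of i] by (intro eventually_nhds_in_open) (auto simp: zero_ereal_def)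
    then show "eventually (\<lambda>w. ereal (norm w) < fps_conv_radius (F i)) (nhds 0)"
      by eventually_elim simp
  qed
  moreover have "eventually (\<lambda>w. \<forall>i. eval_fps (fps_deriv (F i)) w
      = (\<Sum>j\<in>UNIV. a i j (\<alpha> + w) * eval_fps (F j) w)) (nhds 0)"
  proof (rule eventually_all_finite)
    fix i
    have "(\<lambda>w. \<Sum>j\<in>UNIV. a i j (\<alpha> + w) * eval_fps (F j) w) has_fps_expansion fps_deriv (F i)"
      unfolding F_def fps_deriv_formal_solution
      by (intro has_fps_expansion_sum has_fps_expansion_mult a eval_fps_has_fps_expansion
          rad[unfolded F_def])
    then show "eventually (\<lambda>w. eval_fps (fps_deriv (F i)) w
        = (\<Sum>j\<in>UNIV. a i j (\<alpha> + w) * eval_fps (F j) w)) (nhds 0)"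
      by (simp add: has_fps_expansion_def)
  qed
  ultimately have "eventually (\<lambda>w. solves_at a Y (\<alpha> + w)) (nhds 0)"
  proof eventually_elim
    case (elim w)
    show ?case
      unfolding solves_at_def
    proof
      fix i
      have "(eval_fps (F i) has_field_derivative eval_fps (fps_deriv (F i)) w) (at w)"
        using elim by (intro has_field_derivative_eval_fps) simp
      then have "((\<lambda>z. Y z $ i) has_field_derivative eval_fps (fps_deriv (F i)) w) (at (w + \<alpha>))"
        unfolding DERIV_shift by (simp add: Y_def)
      with elim show "((\<lambda>z. Y z $ i) has_field_derivative
          (\<Sum>j\<in>UNIV. a i j (\<alpha> + w) * Y (\<alpha> + w) $ j)) (at (\<alpha> + w))"
        by (simp add: Y_def add.commute)
    qed
  qed
  then show ?thesis
    unfolding eventually_nhds_shift[of _ \<alpha>] by (simp add: Y_def F_def)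
qed

lemma has_fps_expansion_poly_shift:
  "(\<lambda>w. poly p (\<alpha> + w)) has_fps_expansion fps_of_poly (p \<circ>\<^sub>p [:\<alpha>, 1:])"
proof -
  have "eval_fps (fps_of_poly (p \<circ>\<^sub>p [:\<alpha>, 1:])) = (\<lambda>w. poly p (\<alpha> + w))"
    by (rule ext) (simp add: poly_pcompose)
  moreover have "eval_fps (fps_of_poly (p \<circ>\<^sub>p [:\<alpha>, 1:])) has_fps_expansion fps_of_poly (p \<circ>\<^sub>p [:\<alpha>, 1:])"
    by (rule eval_fps_has_fps_expansion) simp
  ultimately show ?thesis by simp
qed

lemma constrained_solution_initial_values:
  fixes A :: "'q::finite \<Rightarrow> 'q \<Rightarrow> complex fps"
  assumes a: "\<And>i j. (\<lambda>w. a i j (\<alpha> + w)) has_fps_expansion A i j"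
    and p: "\<And>i. (\<lambda>w. p i (\<alpha> + w)) has_fps_expansion P i"
  shows "{Y \<alpha> | Y. eventually (\<lambda>z. solves_at a Y z \<and> (\<Sum>i\<in>UNIV. p i z * Y z $ i) = 0) (nhds \<alpha>)}
       = {v. \<forall>x\<in>range (relation_form P A). pairing x v = 0}"
proof -
  have relation_iff: "(\<Sum>i\<in>UNIV. P i * formal_solution A v i) = 0
      \<longleftrightarrow> (\<forall>x\<in>range (relation_form P A). pairing x v = 0)" for v
    by (simp add: fps_eq_iff fps_nth_relation_formal_solution)
  have "Y \<alpha> \<in> {v. (\<Sum>i\<in>UNIV. P i * formal_solution A v i) = 0}"
    if Y: "eventually (\<lambda>z. solves_at a Y z \<and> (\<Sum>i\<in>UNIV. p i z * Y z $ i) = 0) (nhds \<alpha>)" for Y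
  proof -
    have "eventually (solves_at a Y) (nhds \<alpha>)"
      using Y by (rule eventually_mono) simp
    then have "(\<lambda>w. \<Sum>i\<in>UNIV. p i (\<alpha> + w) * Y (\<alpha> + w) $ i)
        has_fps_expansion (\<Sum>i\<in>UNIV. P i * formal_solution A (Y \<alpha>) i)"
      by (intro has_fps_expansion_sum has_fps_expansion_mult p solution_has_fps_expansion[OF a])
    moreover have "eventually (\<lambda>w. (\<Sum>i\<in>UNIV. p i (\<alpha> + w) * Y (\<alpha> + w) $ i) = 0) (nhds 0)"
      using Y unfolding eventually_nhds_shift[of _ \<alpha>] by (rule eventually_mono) simp
    then have "(\<lambda>w. \<Sum>i\<in>UNIV. p i (\<alpha> + w) * Y (\<alpha> + w) $ i) has_fps_expansion 0"
      by (simp add: has_fps_expansion_0_iff)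
    ultimately show ?thesis by (simp add: fps_expansion_unique_complex)
  qed
  moreover have "v \<in> {Y \<alpha> | Y. eventually (\<lambda>z. solves_at a Y z \<and> (\<Sum>i\<in>UNIV. p i z * Y z $ i) = 0) (nhds \<alpha>)}"
    if v: "(\<Sum>i\<in>UNIV. P i * formal_solution A v i) = 0" for v
  proof -
    define Y where "Y = (\<lambda>z. \<chi> i. eval_fps (formal_solution A v i) (z - \<alpha>))"
    have "fps_conv_radius (formal_solution A v i) > 0" for i
      using a by (intro formal_solution_conv_radius_pos) (simp add: has_fps_expansion_def)
    then have "(\<lambda>w. \<Sum>i\<in>UNIV. p i (\<alpha> + w) * Y (\<alpha> + w) $ i) has_fps_expansion 0"
      unfolding v[symmetric] Y_def
      by (simp add: has_fps_expansion_sum has_fps_expansion_mult p eval_fps_has_fps_expansion)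
    then have "eventually (\<lambda>z. (\<Sum>i\<in>UNIV. p i z * Y z $ i) = 0) (nhds \<alpha>)"
      by (simp add: has_fps_expansion_0_iff eventually_nhds_shift[of _ \<alpha>])
    moreover have "eventually (solves_at a Y) (nhds \<alpha>)"
      unfolding Y_def by (rule formal_solution_solves[OF a])
    moreover have "Y \<alpha> = v"
      by (simp add: Y_def vec_eq_iff eval_fps_at_0 formal_solution_nth_0)
    ultimately show ?thesis by (auto intro: eventually_conj)
  qed
  ultimately have "{Y \<alpha> | Y. eventually (\<lambda>z. solves_at a Y z \<and> (\<Sum>i\<in>UNIV. p i z * Y z $ i) = 0) (nhds \<alpha>)}
      = {v. (\<Sum>i\<in>UNIV. P i * formal_solution A v i) = 0}"
    by blast
  then show ?thesis by (simp only: relation_iff)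
qed

lemma constrained_solution_initial_values_defined_over:
  fixes A :: "'q::finite \<Rightarrow> 'q \<Rightarrow> complex fps"
  assumes K: "subfield_of_C K"
    and a: "\<And>i j. (\<lambda>w. a i j (\<alpha> + w)) has_fps_expansion A i j" "\<And>i j. fps_over K (A i j)"
    and p: "\<And>i. (\<lambda>w. p i (\<alpha> + w)) has_fps_expansion P i" "\<And>i. fps_over K (P i)"
  shows "defined_over K
    {Y \<alpha> | Y. eventually (\<lambda>z. solves_at a Y z \<and> (\<Sum>i\<in>UNIV. p i z * Y z $ i) = 0) (nhds \<alpha>)}"
  unfolding constrained_solution_initial_values[OF a(1) p(1)]
  using K relation_form_over[OF K p(2) a(2)] by (intro pairing_kernels_defined_over) auto

lemma solves_on_iff_solves_at:
  "solves_on Pn Pd U Y \<longleftrightarrow> (\<forall>z\<in>U. solves_at (\<lambda>i j z. poly (Pn i j) z / poly (Pd i j) z) Y z)"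
  by (simp add: solves_on_def solves_at_def)

theorem lemma1:
  fixes K :: "complex set"
    and Pn Pd :: "'q::finite \<Rightarrow> 'q \<Rightarrow> complex poly"
    and \<alpha> :: complex
    and P :: "'q \<Rightarrow> complex poly"
  assumes "subfield_of_C K"
    and "\<forall>i j. poly_over K (Pn i j) \<and> poly_over K (Pd i j) \<and> Pd i j \<noteq> 0"
    and "\<alpha> \<in> K" and "\<alpha> \<noteq> 0"
    and "\<forall>i j. poly (Pd i j) \<alpha> \<noteq> 0"
    and "\<forall>i. poly_over K (P i)"
  shows "vec.subspace {Y \<alpha> | Y. \<exists>e>0. solves_on Pn Pd (ball \<alpha> e) Y \<and>
                 (\<forall>z\<in>ball \<alpha> e. (\<Sum>i\<in>UNIV. poly (P i) z * Y z $ i) = 0)}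
       \<and> defined_over K {Y \<alpha> | Y. \<exists>e>0. solves_on Pn Pd (ball \<alpha> e) Y \<and>
                 (\<forall>z\<in>ball \<alpha> e. (\<Sum>i\<in>UNIV. poly (P i) z * Y z $ i) = 0)}"
proof -
  \<comment> \<open>Only regularity at \<open>\<alpha>\<close> matters.\<close>
  define a where "a i j z = poly (Pn i j) z / poly (Pd i j) z" for i j z
  define A where "A i j = fps_of_poly (Pn i j \<circ>\<^sub>p [:\<alpha>, 1:]) / fps_of_poly (Pd i j \<circ>\<^sub>p [:\<alpha>, 1:])" for i j
  have a_expansion: "(\<lambda>w. a i j (\<alpha> + w)) has_fps_expansion A i j" for i j
    unfolding a_def A_def using assms(5)
    by (intro has_fps_expansion_divide' has_fps_expansion_poly_shift) (simp add: fps_nth_poly_shift_0)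
  have A_over: "fps_over K (A i j)" for i j
    unfolding A_def using assms(1-3,5)
    by (intro fps_over_divide fps_over_poly_shift) (simp_all add: fps_nth_poly_shift_0)
  have "{Y \<alpha> | Y. \<exists>e>0. solves_on Pn Pd (ball \<alpha> e) Y \<and>
           (\<forall>z\<in>ball \<alpha> e. (\<Sum>i\<in>UNIV. poly (P i) z * Y z $ i) = 0)}
      = {Y \<alpha> | Y. eventually (\<lambda>z. solves_at a Y z \<and> (\<Sum>i\<in>UNIV. poly (P i) z * Y z $ i) = 0) (nhds \<alpha>)}"
    unfolding solves_on_iff_solves_at ex_ball_iff_eventually_nhds[symmetric] ball_conj_distrib a_def ..
  moreover have "defined_over K
      {Y \<alpha> | Y. eventually (\<lambda>z. solves_at a Y z \<and> (\<Sum>i\<in>UNIV. poly (P i) z * Y z $ i) = 0) (nhds \<alpha>)}"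
    using assms(1,3,6)
    by (intro constrained_solution_initial_values_defined_over[where A = A
          and P = "\<lambda>i. fps_of_poly (P i \<circ>\<^sub>p [:\<alpha>, 1:])"]
        a_expansion A_over has_fps_expansion_poly_shift fps_over_poly_shift) auto
  ultimately show ?thesis using defined_over_imp_subspace by simp
qed

end
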